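(* Let $(L,\rho,\tau)$ be a probabilistic metric space whose triangle function $\tau$ is sup-continuous and satisfies condition (W). If $(A_n)$ is a sequence in $P_f(L)$ converging to $A\in P_f(L)$ with respect to the probabilistic Pompeiu–Hausdorff metric $H$, then $$A=\bigcap_{n\ge1}\operatorname{cl}\Big(\bigcup_{m\ge n}A_m\Big)=\bigcap_{\epsilon>0}\bigcup_{n\ge1}\bigcap_{m\ge n}(A_m)_\epsilon .$$
   Context: $\Delta^+$ is the set of functions $F:[-\infty,\infty]\to[0,1]$ that are nondecreasing, left-continuous on $\mathbb R$, with $F(-\infty)=0$, $F(\infty)=1$, $F(0)=0$; ordered pointwise; $\epsilon_0(x)=0$ for $x\le0$, $=1$ for $x>0$. Infimum of $\{F_i\}$ in $\Delta^+$: $G(x)=\sup_{x'<x}\inf_iF_i(x')$; supremum pointwise. A triangle function is $\tau:\Delta^+\times\Delta^+\to\Delta^+$ commutative, associative, nondecreasing in each argument, with $\tau(F,\epsilon_0)=F$, continuous for weak convergence. A probabilistic metric space $(L,\rho,\tau)$: set $L$, continuous triangle function $\tau$, $\rho(p,q)=F_{pq}\in\Delta^+$ with $F_{pp}=\epsilon_0$, $F_{pq}=\epsilon_0\Rightarrow p=q$, $F_{pq}=F_{qp}$, $F_{pr}\ge\tau(F_{pq},F_{qr})$. Strong topology: neighborhood base $U_t(p)=\{q:F_{pq}(t)>1-t\}$, $t>0$; $\operatorname{cl}$ is closure in it. For $A\subset L$, $\epsilon>0$: $A_\epsilon=\bigcup_{p\in A}U_\epsilon(p)$. $\tau$ is sup-continuous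 if $\tau(\sup_iF_i,G)=\sup_i\tau(F_i,G)$ for every family $\{F_i\}\subset\Delta^+$, $G\in\Delta^+$. Condition (W): for all $x>0$, $F,G\in\Delta^+$, $\alpha,\beta\in\mathbb R$, $F(x)>\alpha$ and $G(x)>\beta$ imply $\tau(F,G)(x)>\alpha+\beta-1$. For nonempty $A,B\subset L$: $F_{pB}(x)=\sup_{q\in B}F_{pq}(x)$, $\Gamma^*_{AB}(x)=\inf_{p\in A}F_{pB}(x)$, $F^*_{AB}(x)=\sup_{x'<x}\Gamma^*_{AB}(x')$, $H(A,B)=F_{AB}=\min\{F^*_{AB},F^*_{BA}\}$. $P_f(L)$ is the family of nonempty closed subsets; $A_n\to A$ with respect to $H$ iff for every $t>0$, $F_{A_nA}(t)>1-t$ for all large $n$. *)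

theory Defs
  imports Complex_Main "HOL-Library.Extended_Real"
begin

type_synonym dist_fun = "ereal \<Rightarrow> real"

definition DeltaPlus :: "dist_fun set" where
  "DeltaPlus = {F. mono F \<and> (\<forall>x. 0 \<le> F x \<and> F x \<le> 1)
      \<and> (\<forall>x::real. continuous (at_left x) (\<lambda>y::real. F (ereal y)))
      \<and> F (-\<infinity>) = 0 \<and> F \<infinity> = 1 \<and> F 0 = 0}"

definition eps0 :: dist_fun where
  "eps0 x = (if x \<le> 0 then 0 else 1)"

definition weak_conv :: "(nat \<Rightarrow> dist_fun) \<Rightarrow> dist_fun \<Rightarrow> bool" where
  "weak_conv Fs F \<longleftrightarrow> (\<forall>x::real. isCont (\<lambda>y::real. F (ereal y)) x
        \<longrightarrow> (\<lambda>n. Fs n (ereal x)) \<longlonglongrightarrow> F (ereal x))"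

definition triangle_function :: "(dist_fun \<Rightarrow> dist_fun \<Rightarrow> dist_fun) \<Rightarrow> bool" where
  "triangle_function \<tau> \<longleftrightarrow>
     (\<forall>F\<in>DeltaPlus. \<forall>G\<in>DeltaPlus. \<tau> F G \<in> DeltaPlus)
   \<and> (\<forall>F\<in>DeltaPlus. \<forall>G\<in>DeltaPlus. \<tau> F G = \<tau> G F)
   \<and> (\<forall>F\<in>DeltaPlus. \<forall>G\<in>DeltaPlus. \<forall>K\<in>DeltaPlus. \<tau> F (\<tau> G K) = \<tau> (\<tau> F G) K)
   \<and> (\<forall>F\<in>DeltaPlus. \<forall>F'\<in>DeltaPlus. \<forall>G\<in>DeltaPlus.
        (\<forall>x. F x \<le> F' x) \<longrightarrow> (\<forall>x. \<tau> F G x \<le> \<tau> F' G x))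
   \<and> (\<forall>F\<in>DeltaPlus. \<tau> F eps0 = F)"

definition continuous_tf :: "(dist_fun \<Rightarrow> dist_fun \<Rightarrow> dist_fun) \<Rightarrow> bool" where
  "continuous_tf \<tau> \<longleftrightarrow> (\<forall>Fs Gs F G.
      (\<forall>n. Fs n \<in> DeltaPlus) \<longrightarrow> (\<forall>n. Gs n \<in> DeltaPlus) \<longrightarrow> F \<in> DeltaPlus \<longrightarrow> G \<in> DeltaPlus \<longrightarrow>
      weak_conv Fs F \<longrightarrow> weak_conv Gs G \<longrightarrow> weak_conv (\<lambda>n. \<tau> (Fs n) (Gs n)) (\<tau> F G))"

definition sup_continuous_tf :: "(dist_fun \<Rightarrow> dist_fun \<Rightarrow> dist_fun) \<Rightarrow> bool" where
  "sup_continuous_tf \<tau> \<longleftrightarrow> (\<forall>S G. S \<noteq> {} \<longrightarrow> S \<subseteq> DeltaPlus \<longrightarrow> G \<in> DeltaPlus \<longrightarrow>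
      \<tau> (\<lambda>x. SUP F\<in>S. F x) G = (\<lambda>x. SUP F\<in>S. \<tau> F G x))"

definition condition_W :: "(dist_fun \<Rightarrow> dist_fun \<Rightarrow> dist_fun) \<Rightarrow> bool" where
  "condition_W \<tau> \<longleftrightarrow> (\<forall>x::real. x > 0 \<longrightarrow> (\<forall>F\<in>DeltaPlus. \<forall>G\<in>DeltaPlus. \<forall>\<alpha> \<beta>::real.
      F (ereal x) > \<alpha> \<longrightarrow> G (ereal x) > \<beta> \<longrightarrow> \<tau> F G (ereal x) > \<alpha> + \<beta> - 1))"

definition PM_space :: "('a \<Rightarrow> 'a \<Rightarrow> dist_fun) \<Rightarrow> (dist_fun \<Rightarrow> dist_fun \<Rightarrow> dist_fun) \<Rightarrow> bool" where
  "PM_space \<rho> \<tau> \<longleftrightarrow> triangle_function \<tau> \<and> continuous_tf \<tau>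
     \<and> (\<forall>p q. \<rho> p q \<in> DeltaPlus)
     \<and> (\<forall>p. \<rho> p p = eps0)
     \<and> (\<forall>p q. \<rho> p q = eps0 \<longrightarrow> p = q)
     \<and> (\<forall>p q. \<rho> p q = \<rho> q p)
     \<and> (\<forall>p q r. \<forall>x. \<rho> p r x \<ge> \<tau> (\<rho> p q) (\<rho> q r) x)"

definition U_nbhd :: "('a \<Rightarrow> 'a \<Rightarrow> dist_fun) \<Rightarrow> real \<Rightarrow> 'a \<Rightarrow> 'a set" where
  "U_nbhd \<rho> t p = {q. \<rho> p q (ereal t) > 1 - t}"

definition strong_cl :: "('a \<Rightarrow> 'a \<Rightarrow> dist_fun) \<Rightarrow> 'a set \<Rightarrow> 'a set" where
  "strong_cl \<rho> S = {p. \<forall>t>0. U_nbhd \<rho> t p \<inter> S \<noteq> {}}"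

definition strong_closed :: "('a \<Rightarrow> 'a \<Rightarrow> dist_fun) \<Rightarrow> 'a set \<Rightarrow> bool" where
  "strong_closed \<rho> S \<longleftrightarrow> strong_cl \<rho> S \<subseteq> S"

definition Pf :: "('a \<Rightarrow> 'a \<Rightarrow> dist_fun) \<Rightarrow> 'a set set" where
  "Pf \<rho> = {S. S \<noteq> {} \<and> strong_closed \<rho> S}"

definition eps_nbhd :: "('a \<Rightarrow> 'a \<Rightarrow> dist_fun) \<Rightarrow> 'a set \<Rightarrow> real \<Rightarrow> 'a set" where
  "eps_nbhd \<rho> A \<epsilon> = (\<Union>p\<in>A. U_nbhd \<rho> \<epsilon> p)"

definition F_pB :: "('a \<Rightarrow> 'a \<Rightarrow> dist_fun) \<Rightarrow> 'a \<Rightarrow> 'a set \<Rightarrow> dist_fun" where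
  "F_pB \<rho> p B x = (SUP q\<in>B. \<rho> p q x)"

definition Gamma_star :: "('a \<Rightarrow> 'a \<Rightarrow> dist_fun) \<Rightarrow> 'a set \<Rightarrow> 'a set \<Rightarrow> dist_fun" where
  "Gamma_star \<rho> A B x = (INF p\<in>A. F_pB \<rho> p B x)"

definition F_star :: "('a \<Rightarrow> 'a \<Rightarrow> dist_fun) \<Rightarrow> 'a set \<Rightarrow> 'a set \<Rightarrow> dist_fun" where
  "F_star \<rho> A B x = (SUP x'\<in>{x'. x' < x}. Gamma_star \<rho> A B x')"

definition Hpm :: "('a \<Rightarrow> 'a \<Rightarrow> dist_fun) \<Rightarrow> 'a set \<Rightarrow> 'a set \<Rightarrow> dist_fun" where
  "Hpm \<rho> A B x = min (F_star \<rho> A B x) (F_star \<rho> B A x)"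

definition H_converges :: "('a \<Rightarrow> 'a \<Rightarrow> dist_fun) \<Rightarrow> (nat \<Rightarrow> 'a set) \<Rightarrow> 'a set \<Rightarrow> bool" where
  "H_converges \<rho> As A \<longleftrightarrow> (\<forall>t::real>0. \<exists>N. \<forall>n\<ge>N. Hpm \<rho> (As n) A (ereal t) > 1 - t)"

end

theory Submission
  imports Defs
begin

text \<open>Convergence in \<open>H\<close> means that for every \<open>t > 0\<close> eventually \<open>A\<close> lies in the
  \<open>t\<close>-neighbourhood of \<open>A\<^sub>n\<close> and \<open>A\<^sub>n\<close> lies in the \<open>t\<close>-neighbourhood of \<open>A\<close>.
  The first half puts \<open>A\<close> inside the \<open>\<epsilon>\<close>-lower limit, which is always contained in the
  closed upper limit. Condition (W) makes strong neighbourhoods compose, \<open>U\<^sub>s\<close> of a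
  point of \<open>U\<^sub>s(p)\<close> lies in \<open>U\<^sub>2\<^sub>s(p)\<close>; with the second half this puts every point of the
  closed upper limit into the closure of \<open>A\<close>, which is \<open>A\<close>.\<close>

definition closed_upper_limit :: "('a \<Rightarrow> 'a \<Rightarrow> dist_fun) \<Rightarrow> (nat \<Rightarrow> 'a set) \<Rightarrow> 'a set" where
  "closed_upper_limit \<rho> As = (\<Inter>n\<in>{1..}. strong_cl \<rho> (\<Union>m\<in>{n..}. As m))"

definition eps_lower_limit :: "('a \<Rightarrow> 'a \<Rightarrow> dist_fun) \<Rightarrow> (nat \<Rightarrow> 'a set) \<Rightarrow> 'a set" where
  "eps_lower_limit \<rho> As = (\<Inter>\<epsilon>\<in>{0<..}. \<Union>n\<in>{1..}. \<Inter>m\<in>{n..}. eps_nbhd \<rho> (As m) \<epsilon>)"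

lemma DeltaPlus_bounds:
  assumes "F \<in> DeltaPlus"
  shows "0 \<le> F x" "F x \<le> 1"
  using assms unfolding DeltaPlus_def by auto

lemma DeltaPlus_mono: "F \<in> DeltaPlus \<Longrightarrow> mono F"
  unfolding DeltaPlus_def by blast

lemma PM_space_DeltaPlus: "PM_space \<rho> \<tau> \<Longrightarrow> \<rho> p q \<in> DeltaPlus"
  unfolding PM_space_def by blast

lemma PM_space_commute: "PM_space \<rho> \<tau> \<Longrightarrow> \<rho> p q = \<rho> q p"
  unfolding PM_space_def by blast

lemma PM_space_triangle: "PM_space \<rho> \<tau> \<Longrightarrow> \<tau> (\<rho> p q) (\<rho> q r) x \<le> \<rho> p r x"
  unfolding PM_space_def by blast

lemma U_nbhd_commute:
  assumes "PM_space \<rho> \<tau>"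
  shows "q \<in> U_nbhd \<rho> t p \<longleftrightarrow> p \<in> U_nbhd \<rho> t q"
  using PM_space_commute[OF assms] unfolding U_nbhd_def by simp

lemma U_nbhd_trans:
  assumes "PM_space \<rho> \<tau>" "condition_W \<tau>" "s > 0"
    and "q \<in> U_nbhd \<rho> s p" "r \<in> U_nbhd \<rho> s q"
  shows "r \<in> U_nbhd \<rho> (2 * s) p"
proof -
  have "\<tau> (\<rho> p q) (\<rho> q r) (ereal s) > (1 - s) + (1 - s) - 1"
    using assms PM_space_DeltaPlus[OF assms(1)] unfolding condition_W_def U_nbhd_def by blast
  also have "\<dots> \<le> \<rho> p r (ereal s)"
    using PM_space_triangle[OF assms(1)] by simp
  also have "\<dots> \<le> \<rho> p r (ereal (2 * s))"
    using DeltaPlus_mono[OF PM_space_DeltaPlus[OF assms(1)]] \<open>s > 0\<close> by (simp add: mono_def)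
  finally show ?thesis
    unfolding U_nbhd_def by simp
qed

lemma mem_eps_nbhd_iff:
  assumes "PM_space \<rho> \<tau>"
  shows "p \<in> eps_nbhd \<rho> A t \<longleftrightarrow> U_nbhd \<rho> t p \<inter> A \<noteq> {}"
  using U_nbhd_commute[OF assms] unfolding eps_nbhd_def by blast

lemma F_pB_bounds:
  assumes "\<And>q. \<rho> p q \<in> DeltaPlus" "B \<noteq> {}"
  shows "0 \<le> F_pB \<rho> p B x" "F_pB \<rho> p B x \<le> 1"
proof -
  obtain q where "q \<in> B" using assms(2) by blast
  have "bdd_above ((\<lambda>q. \<rho> p q x) ` B)"
    using DeltaPlus_bounds(2)[OF assms(1)] by (intro bdd_aboveI) auto
  then have "\<rho> p q x \<le> F_pB \<rho> p B x"
    unfolding F_pB_def using \<open>q \<in> B\<close> by (intro cSUP_upper)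
  then show "0 \<le> F_pB \<rho> p B x"
    using DeltaPlus_bounds(1)[OF assms(1)] by (metis order_trans)
  show "F_pB \<rho> p B x \<le> 1"
    unfolding F_pB_def using assms DeltaPlus_bounds(2) by (intro cSUP_least) auto
qed

lemma Gamma_star_le_F_pB:
  assumes "\<And>p q. \<rho> p q \<in> DeltaPlus" "B \<noteq> {}" "p \<in> A"
  shows "Gamma_star \<rho> A B x \<le> F_pB \<rho> p B x"
proof -
  have "bdd_below ((\<lambda>p. F_pB \<rho> p B x) ` A)"
    using F_pB_bounds(1)[OF assms(1,2)] by (intro bdd_belowI[where m = 0]) auto
  then show ?thesis
    unfolding Gamma_star_def using assms(3) by (rule cINF_lower)
qed

lemma F_star_gt_imp_Gamma_star_gt:
  assumes "\<And>p q. \<rho> p q \<in> DeltaPlus" "B \<noteq> {}" "A \<noteq> {}"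
    and "F_star \<rho> A B (ereal t) > c"
  obtains x where "x < ereal t" "Gamma_star \<rho> A B x > c"
proof -
  obtain p where "p \<in> A" using assms(3) by blast
  have "Gamma_star \<rho> A B x \<le> 1" for x
    using Gamma_star_le_F_pB[OF assms(1,2) \<open>p \<in> A\<close>] F_pB_bounds(2)[OF assms(1,2)]
    by (rule order_trans)
  then have "bdd_above (Gamma_star \<rho> A B ` {x. x < ereal t})"
    by (intro bdd_aboveI[where M = 1]) auto
  moreover have "{x. x < ereal t} \<noteq> {}"
    using less_ereal.simps(5)[of t] by blast
  ultimately have "\<exists>x\<in>{x. x < ereal t}. c < Gamma_star \<rho> A B x"
    using assms(4) less_cSUP_iff unfolding F_star_def by metis
  then show ?thesis
    using that by blast
qed

lemma F_star_gt_imp_close: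
  assumes "\<And>p q. \<rho> p q \<in> DeltaPlus" "B \<noteq> {}" "p \<in> A"
    and "F_star \<rho> A B (ereal t) > c"
  obtains q where "q \<in> B" "\<rho> p q (ereal t) > c"
proof -
  have "A \<noteq> {}"
    using assms(3) by blast
  obtain x where x: "x < ereal t" "Gamma_star \<rho> A B x > c"
    by (rule F_star_gt_imp_Gamma_star_gt[OF assms(1,2) \<open>A \<noteq> {}\<close> assms(4)])
  then have "F_pB \<rho> p B x > c"
    using Gamma_star_le_F_pB[where \<rho> = \<rho> and x = x, OF assms(1-3)] by linarith
  moreover have "bdd_above ((\<lambda>q. \<rho> p q x) ` B)"
    using DeltaPlus_bounds(2)[OF assms(1)] by (intro bdd_aboveI[where M = 1]) auto
  ultimately obtain q where q: "q \<in> B" "\<rho> p q x > c"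
    unfolding F_pB_def using less_cSUP_iff[OF assms(2)] by blast
  have "\<rho> p q x \<le> \<rho> p q (ereal t)"
    using DeltaPlus_mono[OF assms(1)] x(1) by (simp add: mono_def)
  with q show ?thesis
    using that by (meson order_less_le_trans)
qed

lemma F_star_gt_imp_subset_eps_nbhd:
  assumes "PM_space \<rho> \<tau>" "B \<noteq> {}"
    and "F_star \<rho> A B (ereal t) > 1 - t"
  shows "A \<subseteq> eps_nbhd \<rho> B t"
proof
  fix p assume "p \<in> A"
  obtain q where "q \<in> B" "\<rho> p q (ereal t) > 1 - t"
    by (rule F_star_gt_imp_close[where \<rho> = \<rho>,
          OF PM_space_DeltaPlus[OF assms(1)] assms(2) \<open>p \<in> A\<close> assms(3)])
  then have "p \<in> U_nbhd \<rho> t q"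
    unfolding U_nbhd_def using PM_space_commute[OF assms(1), of p q] by simp
  then show "p \<in> eps_nbhd \<rho> B t"
    unfolding eps_nbhd_def using \<open>q \<in> B\<close> by blast
qed

lemma H_converges_eventually_eps_nbhd:
  assumes "PM_space \<rho> \<tau>" "\<forall>n\<ge>1. As n \<noteq> {}" "A \<noteq> {}"
    and "H_converges \<rho> As A" "t > 0"
  shows "\<forall>\<^sub>F n in sequentially. A \<subseteq> eps_nbhd \<rho> (As n) t"
    and "\<forall>\<^sub>F n in sequentially. As n \<subseteq> eps_nbhd \<rho> A t"
proof -
  obtain N where N: "\<forall>n\<ge>N. Hpm \<rho> (As n) A (ereal t) > 1 - t"
    using assms(4,5) unfolding H_converges_def by blast
  have "A \<subseteq> eps_nbhd \<rho> (As n) t \<and> As n \<subseteq> eps_nbhd \<rho> A t" if "n \<ge> max N 1" for n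
  proof
    have "As n \<noteq> {}"
      using assms(2) that by simp
    moreover have "F_star \<rho> A (As n) (ereal t) > 1 - t" "F_star \<rho> (As n) A (ereal t) > 1 - t"
      using N that unfolding Hpm_def by auto
    ultimately show "A \<subseteq> eps_nbhd \<rho> (As n) t" "As n \<subseteq> eps_nbhd \<rho> A t"
      using F_star_gt_imp_subset_eps_nbhd[OF assms(1)] assms(3) by blast+
  qed
  then show "\<forall>\<^sub>F n in sequentially. A \<subseteq> eps_nbhd \<rho> (As n) t"
    and "\<forall>\<^sub>F n in sequentially. As n \<subseteq> eps_nbhd \<rho> A t"
    unfolding eventually_sequentially by blast+
qed

lemma subset_eps_lower_limit:
  assumes "\<And>\<epsilon>. \<epsilon> > 0 \<Longrightarrow> \<forall>\<^sub>F n in sequentially. A \<subseteq> eps_nbhd \<rho> (As n) \<epsilon>"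
  shows "A \<subseteq> eps_lower_limit \<rho> As"
  unfolding eps_lower_limit_def
proof (intro subsetI INT_I)
  fix p and \<epsilon> :: real
  assume "p \<in> A" "\<epsilon> \<in> {0<..}"
  then obtain N where "\<forall>n\<ge>N. A \<subseteq> eps_nbhd \<rho> (As n) \<epsilon>"
    using assms unfolding eventually_sequentially by auto
  then show "p \<in> (\<Union>n\<in>{1..}. \<Inter>m\<in>{n..}. eps_nbhd \<rho> (As m) \<epsilon>)"
    using \<open>p \<in> A\<close> by (intro UN_I[of "max N 1"]) auto
qed

lemma eps_lower_limit_subset_closed_upper_limit:
  assumes "PM_space \<rho> \<tau>"
  shows "eps_lower_limit \<rho> As \<subseteq> closed_upper_limit \<rho> As"
  unfolding eps_lower_limit_def closed_upper_limit_def
proof (intro subsetI INT_I)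
  fix p and n :: nat
  assume p: "p \<in> (\<Inter>\<epsilon>\<in>{0<..}. \<Union>n\<in>{1..}. \<Inter>m\<in>{n..}. eps_nbhd \<rho> (As m) \<epsilon>)"
  show "p \<in> strong_cl \<rho> (\<Union>m\<in>{n..}. As m)"
    unfolding strong_cl_def
  proof (intro CollectI allI impI)
    fix t :: real assume "t > 0"
    then have "p \<in> (\<Union>n\<in>{1..}. \<Inter>m\<in>{n..}. eps_nbhd \<rho> (As m) t)"
      using p by blast
    then obtain n' where "p \<in> eps_nbhd \<rho> (As m) t" if "m \<ge> n'" for m
      by blast
    then have "p \<in> eps_nbhd \<rho> (As (max n n')) t"
      by simp
    then have "U_nbhd \<rho> t p \<inter> As (max n n') \<noteq> {}"
      by (simp add: mem_eps_nbhd_iff[OF assms])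
    moreover have "As (max n n') \<subseteq> (\<Union>m\<in>{n..}. As m)"
      by (rule UN_upper) simp
    ultimately show "U_nbhd \<rho> t p \<inter> (\<Union>m\<in>{n..}. As m) \<noteq> {}"
      by blast
  qed
qed

lemma closed_upper_limit_subset:
  assumes "PM_space \<rho> \<tau>" "condition_W \<tau>" "strong_closed \<rho> A"
    and "\<And>\<epsilon>. \<epsilon> > 0 \<Longrightarrow> \<forall>\<^sub>F n in sequentially. As n \<subseteq> eps_nbhd \<rho> A \<epsilon>"
  shows "closed_upper_limit \<rho> As \<subseteq> A"
proof
  fix p assume p: "p \<in> closed_upper_limit \<rho> As"
  have "U_nbhd \<rho> t p \<inter> A \<noteq> {}" if "t > 0" for t
  proof -
    define s where "s = t / 2"
    have "s > 0" using \<open>t > 0\<close> by (simp add: s_def)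
    then obtain N where N: "\<forall>n\<ge>N. As n \<subseteq> eps_nbhd \<rho> A s"
      using assms(4) unfolding eventually_sequentially by blast
    have "p \<in> strong_cl \<rho> (\<Union>m\<in>{max N 1..}. As m)"
      using p unfolding closed_upper_limit_def by simp
    then obtain q m where q: "q \<in> U_nbhd \<rho> s p" "m \<ge> N" "q \<in> As m"
      using \<open>s > 0\<close> unfolding strong_cl_def by fastforce
    then obtain r where "r \<in> A" "r \<in> U_nbhd \<rho> s q"
      using N mem_eps_nbhd_iff[OF assms(1)] by blast
    then have "r \<in> U_nbhd \<rho> t p"
      using U_nbhd_trans[OF assms(1,2) \<open>s > 0\<close> q(1)] by (simp add: s_def)
    then show ?thesis
      using \<open>r \<in> A\<close> by blast
  qed
  then show "p \<in> A"
    using assms(3) unfolding strong_closed_def strong_cl_def by blast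
qed

theorem proposition4p7:
  fixes \<rho> :: "'a \<Rightarrow> 'a \<Rightarrow> ereal \<Rightarrow> real"
    and \<tau> :: "(ereal \<Rightarrow> real) \<Rightarrow> (ereal \<Rightarrow> real) \<Rightarrow> ereal \<Rightarrow> real"
    and As :: "nat \<Rightarrow> 'a set" and A :: "'a set"
  assumes "PM_space \<rho> \<tau>"
    and "sup_continuous_tf \<tau>"
    and "condition_W \<tau>"
    and "\<forall>n\<ge>1. As n \<in> Pf \<rho>"
    and "A \<in> Pf \<rho>"
    and "H_converges \<rho> As A"
  shows "A = (\<Inter>n\<in>{1..}. strong_cl \<rho> (\<Union>m\<in>{n..}. As m))
       \<and> A = (\<Inter>\<epsilon>\<in>{0<..}. \<Union>n\<in>{1..}. \<Inter>m\<in>{n..}. eps_nbhd \<rho> (As m) \<epsilon>)"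
proof -
  have "A \<noteq> {}" "strong_closed \<rho> A" "\<forall>n\<ge>1. As n \<noteq> {}"
    using assms(4,5) unfolding Pf_def by auto
  note close = H_converges_eventually_eps_nbhd[OF assms(1) \<open>\<forall>n\<ge>1. As n \<noteq> {}\<close>
      \<open>A \<noteq> {}\<close> assms(6)]
  have "A \<subseteq> eps_lower_limit \<rho> As"
    using close(1) by (rule subset_eps_lower_limit)
  moreover have "eps_lower_limit \<rho> As \<subseteq> closed_upper_limit \<rho> As"
    using assms(1) by (rule eps_lower_limit_subset_closed_upper_limit)
  moreover have "closed_upper_limit \<rho> As \<subseteq> A"
    using assms(1,3) \<open>strong_closed \<rho> A\<close> close(2) by (rule closed_upper_limit_subset)
  ultimately show ?thesis
    unfolding closed_upper_limit_def eps_lower_limit_def by (intro conjI) order+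
qed

end
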